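(* Fix $x\in\mathbb{R}^{n}$ and $u\in\mathbb{R}^{n_a}$, and assume that $J_i P^{-1} J_j^\top = 0$ for all $i\neq j$, where $P=P(x)$ and $J_i=J_i(x)$. Then for each contact $i$, the vector $\nu_{\kappa,i} - J_i P^{-1} J_i^\top \lambda_{\kappa,i}$ is independent of $\kappa>0$.
   Context: $P(x)\in\mathbb{R}^{n\times n}$ is symmetric positive definite and $q(x,u)\in\mathbb{R}^n$. There are $n_c$ contacts; for each contact $i$, $J_i(x)\in\mathbb{R}^{3\times n}$ is the contact Jacobian, $\phi_i(x)\in\mathbb{R}$ the signed distance, $\mu_i>0$ the friction coefficient, $\mathcal{F}_i=\{(\lambda_n,\lambda_t)\in\mathbb{R}\times\mathbb{R}^2:\|\lambda_t\|_2\le\mu_i\lambda_n\}$ the friction cone and $\mathcal{F}_i^*=\{(\nu_n,\nu_t):\|\nu_t\|_2\le\nu_n/\mu_i\}$ its dual, and $\psi_i(\nu)=-\tfrac12\log(\nu_n^2/\mu_i^2-\|\nu_t\|_2^2)$ on the interior of $\mathcal{F}_i^*$. For $\kappa>0$, the smoothed next state $x_\kappa^+$ minimizes $\tfrac12 (x^+)^\top P(x)x^+ + q(x,u)^\top x^+ + \kappa\sum_{i=1}^{n_c}\psi_i(\nu_i)$ subject to $\nu_i = J_i(x)(x^+-x)+[\phi_i(x),0,0]^\top$; $\nu_{\kappa,i}$ and the contact forces $\lambda_{\kappa,i}$ satisfy the KKT conditions $P(x)x_\kappa^+ + q(x,u) - \sum_{i} J_i(x)^\top\lambda_{\kappa,i}=0$,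 $\nu_{\kappa,i}=J_i(x)(x_\kappa^+-x)+[\phi_i(x),0,0]^\top$, $\lambda_{\kappa,i}\in\mathcal{F}_i$, $\nu_{\kappa,i}\in\mathcal{F}_i^*$, $\lambda_{\kappa,i}\circ\nu_{\kappa,i}=\kappa e$, with $a\circ b=(a^\top b,\,a_0b_1+b_0a_1)$ for $a=(a_0,a_1),b=(b_0,b_1)\in\mathbb{R}\times\mathbb{R}^2$ and $e=(1,0,0)$. *)

theory Defs
  imports "HOL-Analysis.Analysis"
begin

text \<open>Contact-frame vectors in R^3: component 1 is the normal part, components 2,3 the tangential part.\<close>

definition sym_pos_def_mat :: "real^'n^'n \<Rightarrow> bool" where
  "sym_pos_def_mat A \<longleftrightarrow> transpose A = A \<and> (\<forall>v. v \<noteq> 0 \<longrightarrow> v \<bullet> (A *v v) > 0)"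

definition friction_cone :: "real \<Rightarrow> (real^3) set" where
  "friction_cone mu = {l. sqrt ((l$2)^2 + (l$3)^2) \<le> mu * l$1}"

definition dual_friction_cone :: "real \<Rightarrow> (real^3) set" where
  "dual_friction_cone mu = {v. sqrt ((v$2)^2 + (v$3)^2) \<le> v$1 / mu}"

definition jordan_prod :: "real^3 \<Rightarrow> real^3 \<Rightarrow> real^3" where
  "jordan_prod a b = vector [a \<bullet> b, a$1 * b$2 + b$1 * a$2, a$1 * b$3 + b$1 * a$3]"

definition e_vec :: "real^3" where
  "e_vec = vector [1, 0, 0]"

text \<open>KKT conditions of the smoothed contact problem at state x, input u, smoothing kappa,
  with candidate next state xp, dual variables nu and contact forces lam.\<close>
definition smoothed_KKT ::
  "(real^'n \<Rightarrow> real^'n^'n) \<Rightarrow> (real^'n \<Rightarrow> real^'m \<Rightarrow> real^'n) \<Rightarrow>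
   ('c::finite \<Rightarrow> real^'n \<Rightarrow> real^'n^3) \<Rightarrow> ('c \<Rightarrow> real^'n \<Rightarrow> real) \<Rightarrow> ('c \<Rightarrow> real) \<Rightarrow>
   real^'n \<Rightarrow> real^'m \<Rightarrow> real \<Rightarrow> real^'n \<Rightarrow> ('c \<Rightarrow> real^3) \<Rightarrow> ('c \<Rightarrow> real^3) \<Rightarrow> bool" where
  "smoothed_KKT P q J phi mu x u kappa xp nu lam \<longleftrightarrow>
     P x *v xp + q x u - (\<Sum>i\<in>UNIV. transpose (J i x) *v lam i) = 0 \<and>
     (\<forall>i. nu i = J i x *v (xp - x) + vector [phi i x, 0, 0] \<and>
          lam i \<in> friction_cone (mu i) \<and>
          nu i \<in> dual_friction_cone (mu i) \<and>
          jordan_prod (lam i) (nu i) = kappa *\<^sub>R e_vec)"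

end

theory Submission
  imports Defs
begin

text \<open>Stationarity gives the next state explicitly,
  \<open>x\<^sup>+ = P\<^sup>-\<^sup>1 (\<Sum>\<^sub>j J\<^sub>j\<^sup>T \<lambda>\<^sub>j - q)\<close>. Substituting it into
  \<open>\<nu>\<^sub>i = J\<^sub>i (x\<^sup>+ - x) + \<phi>\<^sub>i e\<close>, the decoupling hypothesis removes every
  cross term \<open>J\<^sub>i P\<^sup>-\<^sup>1 J\<^sub>j\<^sup>T \<lambda>\<^sub>j\<close> with \<open>j \<noteq> i\<close>, so that
  \<open>\<nu>\<^sub>i - J\<^sub>i P\<^sup>-\<^sup>1 J\<^sub>i\<^sup>T \<lambda>\<^sub>i = \<phi>\<^sub>i e - J\<^sub>i (P\<^sup>-\<^sup>1 q + x)\<close>,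
  the contact velocity of the unconstrained step, in which \<open>\<kappa>\<close> does not occur.\<close>

lemma matrix_inv_left:
  fixes A :: "'a::semiring_1^'n^'m"
  assumes "invertible A"
  shows "matrix_inv A ** A = mat 1"
  using assms unfolding invertible_def matrix_inv_def by (rule someI_ex[THEN conjunct2])

lemma sym_pos_def_mat_invertible:
  assumes "sym_pos_def_mat A"
  shows "invertible A"
proof -
  have "\<forall>v. A *v v = 0 \<longrightarrow> v = 0"
    using assms unfolding sym_pos_def_mat_def by force
  then show ?thesis
    using matrix_left_invertible_ker invertible_left_inverse by metis
qed

lemma matrix_vector_mult_sum_decoupled:
  fixes A :: "real^'k^'m" and B :: "'c \<Rightarrow> real^'l^'k"
  assumes "finite S" "i \<in> S" "\<And>j. j \<in> S \<Longrightarrow> j \<noteq> i \<Longrightarrow> A ** B j = 0"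
  shows "A *v (\<Sum>j\<in>S. B j *v v j) = (A ** B i) *v v i"
proof -
  have "A *v (\<Sum>j\<in>S. B j *v v j) = (\<Sum>j\<in>S. (A ** B j) *v v j)"
    by (simp add: linear_sum[OF matrix_vector_mul_linear] matrix_vector_mul_assoc)
  also have "\<dots> = (A ** B i) *v v i"
    using assms by (subst sum.remove[of S i]) (auto intro!: sum.neutral)
  finally show ?thesis .
qed

lemma smoothed_KKT_next_state:
  assumes "invertible (P x)"
    and "smoothed_KKT P q J phi mu x u kappa xp nu lam"
  shows "xp = matrix_inv (P x) *v ((\<Sum>j\<in>UNIV. transpose (J j x) *v lam j) - q x u)"
proof -
  have "P x *v xp = (\<Sum>j\<in>UNIV. transpose (J j x) *v lam j) - q x u"
    using assms(2) unfolding smoothed_KKT_def by (simp add: algebra_simps eq_diff_eq)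
  moreover have "xp = matrix_inv (P x) *v (P x *v xp)"
    by (simp add: matrix_vector_mul_assoc matrix_inv_left[OF assms(1)])
  ultimately show ?thesis by simp
qed

lemma smoothed_KKT_nu_minus_delassus:
  assumes "invertible (P x)"
    and decoupled: "\<And>i j. i \<noteq> j \<Longrightarrow> J i x ** matrix_inv (P x) ** transpose (J j x) = 0"
    and kkt: "smoothed_KKT P q J phi mu x u kappa xp nu lam"
  shows "nu i - (J i x ** matrix_inv (P x) ** transpose (J i x)) *v lam i =
         vector [phi i x, 0, 0] - J i x *v (matrix_inv (P x) *v q x u + x)"
proof -
  let ?Jinv = "J i x ** matrix_inv (P x)"
  have nu: "nu i = J i x *v (xp - x) + vector [phi i x, 0, 0]"
    using kkt unfolding smoothed_KKT_def by blast
  have "J i x *v xp = ?Jinv *v (\<Sum>j\<in>UNIV. transpose (J j x) *v lam j) - ?Jinv *v q x u"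
    by (simp add: smoothed_KKT_next_state[OF assms(1) kkt]
        matrix_vector_mult_diff_distrib matrix_vector_mul_assoc)
  also have "\<dots> = (?Jinv ** transpose (J i x)) *v lam i - ?Jinv *v q x u"
    using decoupled by (subst matrix_vector_mult_sum_decoupled) auto
  finally show ?thesis
    unfolding nu by (simp add: algebra_simps matrix_vector_mul_assoc)
qed

theorem lemma1:
  fixes P :: "real^'n \<Rightarrow> real^'n^'n"
    and q :: "real^'n \<Rightarrow> real^'m \<Rightarrow> real^'n"
    and J :: "'c::finite \<Rightarrow> real^'n \<Rightarrow> real^'n^3"
    and phi :: "'c \<Rightarrow> real^'n \<Rightarrow> real"
    and mu :: "'c \<Rightarrow> real"
    and x :: "real^'n" and u :: "real^'m"
  assumes spd: "\<And>y. sym_pos_def_mat (P y)"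
    and mu_pos: "\<And>i. mu i > 0"
    and decoupled: "\<And>i j. i \<noteq> j \<Longrightarrow> J i x ** matrix_inv (P x) ** transpose (J j x) = 0"
    and k1: "kappa1 > 0" and k2: "kappa2 > 0"
    and kkt1: "smoothed_KKT P q J phi mu x u kappa1 xp1 nu1 lam1"
    and kkt2: "smoothed_KKT P q J phi mu x u kappa2 xp2 nu2 lam2"
  shows "nu1 i - (J i x ** matrix_inv (P x) ** transpose (J i x)) *v lam1 i =
         nu2 i - (J i x ** matrix_inv (P x) ** transpose (J i x)) *v lam2 i"
proof -
  have "invertible (P x)"
    using spd by (rule sym_pos_def_mat_invertible)
  then show ?thesis
    using smoothed_KKT_nu_minus_delassus[OF _ decoupled kkt1]
      smoothed_KKT_nu_minus_delassus[OF _ decoupled kkt2] by simp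
qed

end
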